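(* Let $\mathcal{A} = \{\boldsymbol{a}_k\} \subset \mathbb{C}^n$ be an atomic set such that any $r \le n$ distinct atoms of $\mathcal{A}$ are linearly independent, and let $\boldsymbol{x} \in \mathbb{C}^n$. For a parameter $\boldsymbol{\theta} = \{\boldsymbol{a}_j, d_j : j = 1,\dots,r\}$ with $r$ a positive integer, $\boldsymbol{a}_j \in \mathcal{A}$ and $d_j > 0$, and for $\beta > 0$, define $$\mathcal{L}(\boldsymbol{\theta}, \beta) = \frac{1}{2}\sum_{j=1}^{r} d_j + \frac{1}{2}\, \boldsymbol{x}^H \Big(\sum_{j=1}^{r} d_j\, \boldsymbol{a}_j \boldsymbol{a}_j^H + \beta \boldsymbol{I}\Big)^{-1} \boldsymbol{x}.$$ Then $$\|\boldsymbol{x}\|_{\mathcal{A}} = \inf_{\boldsymbol{\theta}} \lim_{\beta \to 0^+} \mathcal{L}(\boldsymbol{\theta}, \beta) = \lim_{\beta \to 0^+} \inf_{\boldsymbol{\theta}} \mathcal{L}(\boldsymbol{\theta}, \beta),$$ where the infima range over all such $\boldsymbol{\theta}$ (including all $r$), and limits may take the value $+\infty$.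
   Context: For an atomic set $\mathcal{A} \subset \mathbb{C}^n$, the atomic norm of $\boldsymbol{x} \in \mathbb{C}^n$ is $\|\boldsymbol{x}\|_{\mathcal{A}} = \inf\{ \sum_{k=1}^{r} |s_k| : r \in \mathbb{N},\ s_k \in \mathbb{C},\ \boldsymbol{a}_k \in \mathcal{A},\ \boldsymbol{x} = \sum_{k=1}^{r} s_k \boldsymbol{a}_k \}$. $\boldsymbol{I}$ is the $n\times n$ identity and $^H$ denotes conjugate transpose. *)

theory Defs
  imports "HOL-Analysis.Analysis"
begin

text \<open>Vectors in C^n are complex ^ 'n with n = CARD('n); complex-linear
  independence is vec.independent (scalar multiplication (*s)).\<close>

definition cmat_adj_outer :: "complex^'n \<Rightarrow> complex^'n^'n" where
  "cmat_adj_outer a = (\<chi> i k. a $ i * cnj (a $ k))"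

definition quad_form :: "complex^'n \<Rightarrow> complex^'n^'n \<Rightarrow> complex" where
  "quad_form x M = (\<Sum>i\<in>UNIV. cnj (x $ i) * (M *v x) $ i)"

text \<open>Atomic norm (value +infinity when no decomposition exists).\<close>
definition atomic_norm :: "(complex^'n) set \<Rightarrow> complex^'n \<Rightarrow> ereal" where
  "atomic_norm A x =
     (INF p \<in> {(r::nat, s::nat\<Rightarrow>complex, a::nat\<Rightarrow>complex^'n). r \<ge> 1 \<and> (\<forall>k<r. a k \<in> A) \<and>
                  x = (\<Sum>k<r. s k *s a k)}.
        ereal (\<Sum>k<fst p. cmod (fst (snd p) k)))"

definition params :: "(complex^'n) set \<Rightarrow> (nat \<times> (nat \<Rightarrow> complex^'n) \<times> (nat \<Rightarrow> real)) set" where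
  "params A = {(r, a, d). r \<ge> 1 \<and> (\<forall>j<r. a j \<in> A \<and> d j > 0)}"

definition Lfun :: "complex^'n \<Rightarrow> nat \<times> (nat \<Rightarrow> complex^'n) \<times> (nat \<Rightarrow> real) \<Rightarrow> real \<Rightarrow> real" where
  "Lfun x \<theta> \<beta> = (case \<theta> of (r, a, d) \<Rightarrow>
     (1/2) * (\<Sum>j<r. d j) +
     (1/2) * Re (quad_form x (matrix_inv
        ((\<Sum>j<r. d j *\<^sub>R cmat_adj_outer (a j)) + \<beta> *\<^sub>R mat 1))))"

end

theory Submission
  imports Defs
begin

(* For beta > 0 the regularised Gram matrix M = sum_j d_j a_j a_j^H + beta I is positive definite,
   and x^H M^-1 x is the minimum of sum_j |w_j|^2 / d_j + |e|^2 / beta over all splittings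
   x = sum_j w_j a_j + e.  Consequently L(theta, beta) decreases in beta, so every limit at 0+ is a
   supremum, and by AM-GM L(theta, beta) >= sum_j |w_j| + |e|^2 / (2 beta) for some splitting.
   Taking d_j = |s_j| + eps for an atomic decomposition x = sum_j s_j a_j shows
   inf_theta lim_beta L <= ||x||_A.  Conversely, if x is outside span A then |e| is at least the
   distance from x to span A, so L blows up uniformly in theta; if x is in span A, the residual e is
   a combination of a fixed finite set of atoms with l1-cost K |e|, whence
   L(theta, beta) >= ||x||_A - beta K^2 / 2.  So sup_beta inf_theta L >= ||x||_A and
   ||x||_A >= inf_theta sup_beta L, and the minimax inequality closes the chain. *)

section \<open>A complex inner product\<close>

definition cinner :: "complex^'n \<Rightarrow> complex^'n \<Rightarrow> complex" where
  "cinner u v = (\<Sum>i\<in>UNIV. cnj (u $ i) * v $ i)"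

lemma cinner_add_left: "cinner (u + w) v = cinner u v + cinner w v"
  by (simp add: cinner_def algebra_simps sum.distrib)

lemma cinner_add_right: "cinner u (v + w) = cinner u v + cinner u w"
  by (simp add: cinner_def algebra_simps sum.distrib)

lemma cinner_scale_left: "cinner (c *s u) v = cnj c * cinner u v"
  by (simp add: cinner_def sum_distrib_left algebra_simps)

lemma cinner_scale_right: "cinner u (c *s v) = c * cinner u v"
  by (simp add: cinner_def sum_distrib_left algebra_simps)

lemma cinner_zero_left [simp]: "cinner 0 v = 0"
  by (simp add: cinner_def)

lemma cinner_zero_right [simp]: "cinner u 0 = 0"
  by (simp add: cinner_def)

lemma cinner_sum_left: "cinner (\<Sum>j\<in>J. f j) v = (\<Sum>j\<in>J. cinner (f j) v)"
  by (induction J rule: infinite_finite_induct) (auto simp: cinner_add_left)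

lemma cinner_sum_right: "cinner u (\<Sum>j\<in>J. f j) = (\<Sum>j\<in>J. cinner u (f j))"
  by (induction J rule: infinite_finite_induct) (auto simp: cinner_add_right)

lemma cnj_cinner: "cnj (cinner u v) = cinner v u"
  by (simp add: cinner_def mult.commute)

lemma Re_cinner: "Re (cinner u v) = inner u v"
  by (simp add: cinner_def inner_vec_def inner_complex_def)

lemma cinner_self: "cinner u u = of_real ((norm u)\<^sup>2)"
  by (simp add: complex_eq_iff Re_cinner dot_square_norm) (simp add: cinner_def)

lemma scale_of_real_eq_scaleR: "(of_real c :: complex) *s v = c *\<^sub>R (v :: complex^'n)"
  by (simp add: vec_eq_iff) (simp add: scaleR_conv_of_real)

lemma cmat_adj_outer_mult: "cmat_adj_outer a *v y = cinner a y *s a"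
  by (simp add: vec_eq_iff matrix_vector_mult_def cmat_adj_outer_def cinner_def
      sum_distrib_left algebra_simps)

lemma scaleR_matrix_vector_mult: "(c *\<^sub>R M) *v v = c *\<^sub>R (M *v (v :: complex^'n))"
  by (simp add: vec_eq_iff matrix_vector_mult_def scaleR_sum_right)

lemma weighted_am_gm:
  fixes d u t :: real
  assumes "d > 0"
  shows "2 * u * t \<le> u\<^sup>2 / d + d * t\<^sup>2"
proof -
  have "0 \<le> (u - d * t)\<^sup>2 / d" using assms by simp
  also have "\<dots> = u\<^sup>2 / d + d * t\<^sup>2 - 2 * u * t"
    using assms by (simp add: field_simps power2_eq_square)
  finally show ?thesis by simp
qed

lemma tendsto_at_right_SUP_antimono:
  fixes f :: "real \<Rightarrow> 'a::{complete_linorder, linorder_topology}"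
  assumes antimono: "\<And>s t. a < s \<Longrightarrow> s \<le> t \<Longrightarrow> f t \<le> f s"
  shows "(f \<longlongrightarrow> (SUP t\<in>{a<..}. f t)) (at_right a)"
proof (rule order_tendstoI)
  fix y assume "y < (SUP t\<in>{a<..}. f t)"
  then obtain s where s: "a < s" "y < f s" by (auto simp: less_SUP_iff)
  then show "\<forall>\<^sub>F t in at_right a. y < f t"
    unfolding eventually_at_right_field
    by (intro exI[of _ s]) (fastforce intro: order_less_le_trans[OF s(2)] antimono)
next
  fix y assume y: "(SUP t\<in>{a<..}. f t) < y"
  show "\<forall>\<^sub>F t in at_right a. f t < y"
    using eventually_at_right_less[of a]
    by eventually_elim (auto intro: order_le_less_trans[OF _ y] SUP_upper)
qed

lemma matrix_inv_mult:
  assumes "invertible (M :: 'a::semiring_1^'n^'m)"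
  shows "M ** matrix_inv M = mat 1" "matrix_inv M ** M = mat 1"
  using someI_ex[OF assms[unfolded invertible_def]] by (auto simp: matrix_inv_def)

lemma complex_linear_imp_linear:
  assumes "Vector_Spaces.linear (*s) (*) (f :: complex^'n \<Rightarrow> complex)"
  shows "linear f"
proof (rule linearI)
  show "f (u + v) = f u + f v" for u v
    by (rule module_hom.add[OF assms[unfolded module_hom_iff_linear[symmetric]]])
  show "f (c *\<^sub>R v) = c *\<^sub>R f v" for c v
    using module_hom.scale[OF assms[unfolded module_hom_iff_linear[symmetric]], of "of_real c" v]
    by (simp add: scale_of_real_eq_scaleR scaleR_conv_of_real)
qed

lemma closed_vec_span: "closed (vec.span (S :: (complex^'n) set))"
proof (rule closed_subspace)
  show "subspace (vec.span S)"
    unfolding subspace_def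
    by (auto simp: vec.span_zero vec.span_add vec.span_scale simp flip: scale_of_real_eq_scaleR)
qed

lemma vec_span_bounded_coordinates:
  fixes A :: "(complex^'n) set"
  obtains B K where "finite B" "B \<subseteq> A"
    and "\<And>v. v \<in> vec.span A \<Longrightarrow>
      \<exists>g. v = (\<Sum>b\<in>B. g b *s b) \<and> (\<Sum>b\<in>B. cmod (g b)) \<le> K * norm v"
proof -
  obtain B where B: "B \<subseteq> A" "vec.independent B" "A \<subseteq> vec.span B"
    by (rule vec.maximal_independent_subset)
  have span: "vec.span A = vec.span B"
    using B by (simp add: vec.span_eq vec.span_superset subset_trans)
  define C where "C = vec.extend_basis B"
  have C: "B \<subseteq> C" "vec.independent C" "vec.span C = UNIV"
    unfolding C_def using B(2)
    by (auto simp: vec.extend_basis_superset vec.independent_extend_basis)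
  have "\<exists>k. \<forall>v. cmod (vec.representation C v c) \<le> k * norm v" for c
    using C(2,3)
    by (intro linear_bounded complex_linear_imp_linear vec.linear_representation)
  then obtain k where k: "\<And>c v. cmod (vec.representation C v c) \<le> k c * norm v"
    by metis
  have "finite B" using B(2) vec.finiteI_independent by blast
  moreover have "\<exists>g. v = (\<Sum>b\<in>B. g b *s b) \<and> (\<Sum>b\<in>B. cmod (g b)) \<le> (\<Sum>b\<in>B. k b) * norm v"
    if "v \<in> vec.span A" for v
  proof (intro exI conjI)
    have v: "v \<in> vec.span B" using that span by simp
    show "v = (\<Sum>b\<in>B. vec.representation B v b *s b)"
      using vec.sum_representation_eq[OF B(2) v \<open>finite B\<close>] by simp
    have "vec.representation B v = vec.representation C v"
      using vec.representation_extend[OF C(2) v C(1)] by simp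
    then show "(\<Sum>b\<in>B. cmod (vec.representation B v b)) \<le> (\<Sum>b\<in>B. k b) * norm v"
      by (simp add: sum_distrib_right sum_mono k)
  qed
  ultimately show ?thesis using that B(1) by blast
qed

section \<open>The regularised Gram matrix and a variational formula for L\<close>

definition reg_gram ::
    "nat \<Rightarrow> (nat \<Rightarrow> complex^'n) \<Rightarrow> (nat \<Rightarrow> real) \<Rightarrow> real \<Rightarrow> complex^'n^'n" where
  "reg_gram r a d \<beta> = (\<Sum>j<r. d j *\<^sub>R cmat_adj_outer (a j)) + \<beta> *\<^sub>R mat 1"

lemma Lfun_reg_gram:
  "Lfun x (r, a, d) \<beta> = (\<Sum>j<r. d j) / 2 + Re (quad_form x (matrix_inv (reg_gram r a d \<beta>))) / 2"
  by (simp add: Lfun_def reg_gram_def)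

lemma reg_gram_mult:
  "reg_gram r a d \<beta> *v y = (\<Sum>j<r. d j *\<^sub>R (cinner (a j) y *s a j)) + \<beta> *\<^sub>R y"
proof -
  have "(\<Sum>j\<in>J. d j *\<^sub>R cmat_adj_outer (a j)) *v y = (\<Sum>j\<in>J. d j *\<^sub>R (cinner (a j) y *s a j))" for J
    by (induction J rule: infinite_finite_induct)
       (auto simp: matrix_vector_mult_add_rdistrib scaleR_matrix_vector_mult cmat_adj_outer_mult)
  then show ?thesis
    by (simp add: reg_gram_def matrix_vector_mult_add_rdistrib scaleR_matrix_vector_mult)
qed

lemma cinner_reg_gram:
  "cinner y (reg_gram r a d \<beta> *v y) =
    of_real ((\<Sum>j<r. d j * (cmod (cinner (a j) y))\<^sup>2) + \<beta> * (norm y)\<^sup>2)"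
proof -
  have "cinner (a j) y * cinner y (a j) = of_real ((cmod (cinner (a j) y))\<^sup>2)" for j
    by (metis complex_norm_square cnj_cinner)
  then show ?thesis
    by (simp add: reg_gram_mult mult.assoc cinner_add_right cinner_sum_right cinner_scale_right
        cinner_self flip: scale_of_real_eq_scaleR)
qed

lemma reg_gram_invertible:
  assumes d: "\<forall>j<r. d j \<ge> 0" and \<beta>: "\<beta> > 0"
  shows "invertible (reg_gram r a d \<beta>)"
proof -
  have "y = 0" if "reg_gram r a d \<beta> *v y = 0" for y
  proof -
    have "complex_of_real ((\<Sum>j<r. d j * (cmod (cinner (a j) y))\<^sup>2) + \<beta> * (norm y)\<^sup>2)
        = cinner y (reg_gram r a d \<beta> *v y)"
      by (rule cinner_reg_gram[symmetric])
    also have "\<dots> = 0" using that by simp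
    finally have "(\<Sum>j<r. d j * (cmod (cinner (a j) y))\<^sup>2) + \<beta> * (norm y)\<^sup>2 = 0"
      by (simp only: of_real_eq_0_iff)
    moreover have "(\<Sum>j<r. d j * (cmod (cinner (a j) y))\<^sup>2) \<ge> 0"
      using d by (intro sum_nonneg) auto
    ultimately have "\<beta> * (norm y)\<^sup>2 \<le> 0" by linarith
    with \<beta> show "y = 0" by (simp add: mult_le_0_iff)
  qed
  then show ?thesis
    by (simp add: invertible_left_inverse matrix_left_invertible_ker)
qed

lemma Lfun_eq_energy:
  assumes "\<forall>j<r. d j \<ge> 0" and "\<beta> > 0" and x: "reg_gram r a d \<beta> *v y = x"
  shows "Lfun x (r, a, d) \<beta> =
    (\<Sum>j<r. d j) / 2 + ((\<Sum>j<r. d j * (cmod (cinner (a j) y))\<^sup>2) + \<beta> * (norm y)\<^sup>2) / 2"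
proof -
  let ?M = "reg_gram r a d \<beta>"
  have "matrix_inv ?M *v x = y"
    using matrix_inv_mult(2)[OF reg_gram_invertible[OF assms(1,2), of a]]
    by (simp add: matrix_vector_mul_assoc flip: x)
  then have "quad_form x (matrix_inv ?M) = cnj (cinner y (?M *v y))"
    by (simp add: quad_form_def cnj_cinner x) (simp add: cinner_def)
  then show ?thesis
    by (simp add: Lfun_reg_gram cinner_reg_gram)
qed

lemma reg_gram_surj:
  assumes "\<forall>j<r. d j \<ge> 0" and "\<beta> > 0"
  obtains y where "reg_gram r a d \<beta> *v y = x"
  using matrix_inv_mult(1)[OF reg_gram_invertible[OF assms, of a]]
  by (metis matrix_vector_mul_assoc matrix_vector_mul_lid)

lemma Lfun_le_decomp_cost:
  assumes d: "\<forall>j<r. d j > 0" and \<beta>: "\<beta> > 0" and x: "x = (\<Sum>j<r. w j *s a j) + e"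
  shows "Lfun x (r, a, d) \<beta> \<le>
    (\<Sum>j<r. d j) / 2 + ((\<Sum>j<r. (cmod (w j))\<^sup>2 / d j) + (norm e)\<^sup>2 / \<beta>) / 2"
proof -
  have d0: "\<forall>j<r. d j \<ge> 0" using d by auto
  obtain y where y: "reg_gram r a d \<beta> *v y = x" using reg_gram_surj[OF d0 \<beta>] .
  define Q where "Q = (\<Sum>j<r. d j * (cmod (cinner (a j) y))\<^sup>2) + \<beta> * (norm y)\<^sup>2"
  have "cinner y x = of_real Q"
    using cinner_reg_gram[of y r a d \<beta>] by (simp add: Q_def y)
  then have "Q = Re (cinner x y)"
    by (metis Re_complex_of_real cnj_cinner complex_cnj_complex_of_real)
  also have "\<dots> = (\<Sum>j<r. Re (cnj (w j) * cinner (a j) y)) + inner e y"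
    by (simp add: x cinner_add_left cinner_sum_left cinner_scale_left Re_cinner)
  also have "\<dots> \<le> (\<Sum>j<r. cmod (w j) * cmod (cinner (a j) y)) + norm e * norm y"
    by (intro add_mono sum_mono norm_cauchy_schwarz)
       (metis complex_Re_le_cmod complex_mod_cnj norm_mult)
  also have "\<dots> \<le> ((\<Sum>j<r. (cmod (w j))\<^sup>2 / d j) + (norm e)\<^sup>2 / \<beta> + Q) / 2"
  proof -
    have "2 * (cmod (w j) * cmod (cinner (a j) y))
        \<le> (cmod (w j))\<^sup>2 / d j + d j * (cmod (cinner (a j) y))\<^sup>2" if "j < r" for j
      using weighted_am_gm[of "d j"] d that by (simp add: mult.assoc)
    then have "2 * (\<Sum>j<r. cmod (w j) * cmod (cinner (a j) y))
        \<le> (\<Sum>j<r. (cmod (w j))\<^sup>2 / d j) + (\<Sum>j<r. d j * (cmod (cinner (a j) y))\<^sup>2)"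
      by (simp add: sum_distrib_left flip: sum.distrib) (rule sum_mono, simp)
    moreover have "2 * (norm e * norm y) \<le> (norm e)\<^sup>2 / \<beta> + \<beta> * (norm y)\<^sup>2"
      using weighted_am_gm[OF \<beta>] by (simp add: mult.assoc)
    ultimately show ?thesis by (simp add: Q_def)
  qed
  finally have "Q \<le> (\<Sum>j<r. (cmod (w j))\<^sup>2 / d j) + (norm e)\<^sup>2 / \<beta>" by simp
  then show ?thesis
    using Lfun_eq_energy[OF d0 \<beta> y] unfolding Q_def[symmetric] by simp
qed

lemma Lfun_attains_decomp_cost:
  assumes d: "\<forall>j<r. d j > 0" and \<beta>: "\<beta> > 0"
  obtains w e where "x = (\<Sum>j<r. w j *s a j) + e"
    and "Lfun x (r, a, d) \<beta> =
      (\<Sum>j<r. d j) / 2 + ((\<Sum>j<r. (cmod (w j))\<^sup>2 / d j) + (norm e)\<^sup>2 / \<beta>) / 2"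
proof -
  have d0: "\<forall>j<r. d j \<ge> 0" using d by auto
  obtain y where y: "reg_gram r a d \<beta> *v y = x" using reg_gram_surj[OF d0 \<beta>] .
  define w where "w j = of_real (d j) * cinner (a j) y" for j
  have "x = (\<Sum>j<r. w j *s a j) + \<beta> *\<^sub>R y"
    by (simp add: w_def reg_gram_mult flip: y scale_of_real_eq_scaleR)
  moreover have "(\<Sum>j<r. (cmod (w j))\<^sup>2 / d j) = (\<Sum>j<r. d j * (cmod (cinner (a j) y))\<^sup>2)"
    using d by (intro sum.cong) (auto simp: w_def norm_mult power2_eq_square)
  moreover have "(norm (\<beta> *\<^sub>R y))\<^sup>2 / \<beta> = \<beta> * (norm y)\<^sup>2"
    using \<beta> by (simp add: power2_eq_square)
  ultimately show ?thesis
    using Lfun_eq_energy[OF d0 \<beta> y] by (intro that[of w "\<beta> *\<^sub>R y"]) simp_all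
qed

lemma Lfun_antimono:
  assumes d: "\<forall>j<r. d j > 0" and \<beta>: "0 < \<beta>\<^sub>1" "\<beta>\<^sub>1 \<le> \<beta>\<^sub>2"
  shows "Lfun x (r, a, d) \<beta>\<^sub>2 \<le> Lfun x (r, a, d) \<beta>\<^sub>1"
proof -
  obtain w e where x: "x = (\<Sum>j<r. w j *s a j) + e"
    and L1: "Lfun x (r, a, d) \<beta>\<^sub>1 =
      (\<Sum>j<r. d j) / 2 + ((\<Sum>j<r. (cmod (w j))\<^sup>2 / d j) + (norm e)\<^sup>2 / \<beta>\<^sub>1) / 2"
    using Lfun_attains_decomp_cost[OF d \<beta>(1)] .
  have "(norm e)\<^sup>2 / \<beta>\<^sub>2 \<le> (norm e)\<^sup>2 / \<beta>\<^sub>1"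
    using \<beta> by (intro divide_left_mono) auto
  then show ?thesis
    using Lfun_le_decomp_cost[OF d _ x, of \<beta>\<^sub>2] L1 \<beta> by argo
qed

lemma Lfun_ge_decomp:
  assumes d: "\<forall>j<r. d j > 0" and \<beta>: "\<beta> > 0"
  obtains w e where "x = (\<Sum>j<r. w j *s a j) + e"
    and "(\<Sum>j<r. cmod (w j)) + (norm e)\<^sup>2 / (2 * \<beta>) \<le> Lfun x (r, a, d) \<beta>"
proof -
  obtain w e where x: "x = (\<Sum>j<r. w j *s a j) + e"
    and L: "Lfun x (r, a, d) \<beta> =
      (\<Sum>j<r. d j) / 2 + ((\<Sum>j<r. (cmod (w j))\<^sup>2 / d j) + (norm e)\<^sup>2 / \<beta>) / 2"
    using Lfun_attains_decomp_cost[OF d \<beta>] .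
  have "2 * cmod (w j) \<le> (cmod (w j))\<^sup>2 / d j + d j" if "j < r" for j
    using weighted_am_gm[of "d j" "cmod (w j)" 1] d that by simp
  then have "2 * (\<Sum>j<r. cmod (w j)) \<le> (\<Sum>j<r. (cmod (w j))\<^sup>2 / d j) + (\<Sum>j<r. d j)"
    by (simp add: sum_distrib_left flip: sum.distrib) (rule sum_mono, simp)
  then have "(\<Sum>j<r. cmod (w j)) + (norm e)\<^sup>2 / (2 * \<beta>) \<le> Lfun x (r, a, d) \<beta>"
    unfolding L by argo
  with x show ?thesis by (rule that)
qed

lemma Lfun_le_sum_norm:
  assumes \<epsilon>: "\<epsilon> > 0" and \<beta>: "\<beta> > 0" and x: "x = (\<Sum>j<r. s j *s a j)"
  shows "Lfun x (r, a, \<lambda>j. cmod (s j) + \<epsilon>) \<beta> \<le> (\<Sum>j<r. cmod (s j)) + r * \<epsilon> / 2"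
proof -
  define d where "d j = cmod (s j) + \<epsilon>" for j
  have d_pos: "d j > 0" for j using \<epsilon> by (simp add: d_def add_nonneg_pos)
  then have d: "\<forall>j<r. d j > 0" by simp
  have "(cmod (s j))\<^sup>2 / d j \<le> cmod (s j)" for j
  proof -
    have "(cmod (s j))\<^sup>2 \<le> cmod (s j) * d j"
      using \<epsilon> by (simp add: d_def power2_eq_square algebra_simps)
    then show ?thesis by (simp add: pos_divide_le_eq[OF d_pos])
  qed
  then have "(\<Sum>j<r. (cmod (s j))\<^sup>2 / d j) \<le> (\<Sum>j<r. cmod (s j))"
    by (rule sum_mono)
  moreover have "(\<Sum>j<r. d j) = (\<Sum>j<r. cmod (s j)) + r * \<epsilon>"
    by (simp add: d_def sum.distrib)
  moreover have "Lfun x (r, a, d) \<beta> \<le> (\<Sum>j<r. d j) / 2 + (\<Sum>j<r. (cmod (s j))\<^sup>2 / d j) / 2"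
    using Lfun_le_decomp_cost[OF d \<beta>, of x s a 0] x by simp
  ultimately have "Lfun x (r, a, d) \<beta> \<le> (\<Sum>j<r. cmod (s j)) + r * \<epsilon> / 2" by argo
  then show ?thesis unfolding d_def .
qed

section \<open>Comparison with the atomic norm\<close>

lemma params_cases:
  assumes "\<theta> \<in> params A"
  obtains r a d where "\<theta> = (r, a, d)" "r \<ge> 1" "\<forall>j<r. a j \<in> A" "\<forall>j<r. d j > 0"
  using assms unfolding params_def by auto

lemma atomic_norm_le_sum:
  assumes "finite I" "I \<noteq> {}" "a ` I \<subseteq> A" "x = (\<Sum>i\<in>I. s i *s a i)"
  shows "atomic_norm A x \<le> ereal (\<Sum>i\<in>I. cmod (s i))"
proof -
  obtain h where h: "bij_betw h {..<card I} I"
    using ex_bij_betw_nat_finite[OF assms(1)] by (auto simp: lessThan_atLeast0)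
  have reindex: "(\<Sum>k<card I. f (h k)) = (\<Sum>i\<in>I. f i)" for f :: "_ \<Rightarrow> 'z::comm_monoid_add"
    using sum.reindex_bij_betw[OF h] .
  have "h k \<in> I" if "k < card I" for k
    using h that by (auto dest: bij_betwE)
  then have "(card I, s \<circ> h, a \<circ> h) \<in> {(r, s, a). r \<ge> 1 \<and> (\<forall>k<r. a k \<in> A) \<and> x = (\<Sum>k<r. s k *s a k)}"
    using assms reindex[of "\<lambda>i. s i *s a i"] by (auto simp: Suc_le_eq card_gt_0_iff)
  then have "atomic_norm A x \<le> ereal (\<Sum>k<card I. cmod (s (h k)))"
    unfolding atomic_norm_def by (rule INF_lower2) simp
  then show ?thesis by (simp only: reindex[of "\<lambda>i. cmod (s i)"])
qed

lemma atomic_norm_le_Lfun_add: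
  assumes x: "x \<in> vec.span A"
  obtains K where "\<And>\<theta> \<beta>. \<theta> \<in> params A \<Longrightarrow> \<beta> > 0 \<Longrightarrow>
    atomic_norm A x \<le> ereal (Lfun x \<theta> \<beta> + \<beta> * K\<^sup>2 / 2)"
proof -
  obtain B K where B: "finite B" "B \<subseteq> A"
    and coords: "\<And>v. v \<in> vec.span A \<Longrightarrow>
      \<exists>g. v = (\<Sum>b\<in>B. g b *s b) \<and> (\<Sum>b\<in>B. cmod (g b)) \<le> K * norm v"
    using vec_span_bounded_coordinates by blast
  have "atomic_norm A x \<le> ereal (Lfun x \<theta> \<beta> + \<beta> * K\<^sup>2 / 2)"
    if \<theta>: "\<theta> \<in> params A" and \<beta>: "\<beta> > 0" for \<theta> \<beta>
  proof -
    obtain r a d where rad: "\<theta> = (r, a, d)" "r \<ge> 1" "\<forall>j<r. a j \<in> A" "\<forall>j<r. d j > 0"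
      using \<theta> by (rule params_cases)
    obtain w e where xe: "x = (\<Sum>j<r. w j *s a j) + e"
      and L: "(\<Sum>j<r. cmod (w j)) + (norm e)\<^sup>2 / (2 * \<beta>) \<le> Lfun x \<theta> \<beta>"
      using Lfun_ge_decomp[OF rad(4) \<beta>, of x a] rad(1) by blast
    have "e = x - (\<Sum>j<r. w j *s a j)" using xe by simp
    also have "\<dots> \<in> vec.span A"
      using rad(3) by (intro vec.span_diff x vec.span_sum vec.span_scale vec.span_base) auto
    finally obtain g where e: "e = (\<Sum>b\<in>B. g b *s b)"
      and g: "(\<Sum>b\<in>B. cmod (g b)) \<le> K * norm e"
      using coords by blast
    let ?s = "case_sum w g" and ?a = "case_sum a id"
    have "x = (\<Sum>i\<in>{..<r} <+> B. ?s i *s ?a i)"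
      using B(1) by (simp add: sum.Plus comp_def xe e)
    moreover have "?a ` ({..<r} <+> B) \<subseteq> A" using rad(3) B(2) by auto
    moreover have "{..<r} <+> B \<noteq> {}" using rad(2) by (auto simp: lessThan_empty_iff)
    ultimately have "atomic_norm A x \<le> ereal (\<Sum>i\<in>{..<r} <+> B. cmod (?s i))"
      using B(1) by (intro atomic_norm_le_sum) auto
    also have "(\<Sum>i\<in>{..<r} <+> B. cmod (?s i)) \<le> (\<Sum>j<r. cmod (w j)) + K * norm e"
      using B(1) g by (simp add: sum.Plus comp_def)
    also have "\<dots> \<le> Lfun x \<theta> \<beta> + \<beta> * K\<^sup>2 / 2"
      using weighted_am_gm[OF \<beta>, of "norm e" K] L by (simp add: field_simps)
    finally show ?thesis by simp
  qed
  then show ?thesis by (rule that)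
qed

lemma Lfun_ge_infdist_span:
  assumes \<theta>: "\<theta> \<in> params A" and \<beta>: "\<beta> > 0"
  shows "(infdist x (vec.span A))\<^sup>2 / (2 * \<beta>) \<le> Lfun x \<theta> \<beta>"
proof -
  obtain r a d where rad: "\<theta> = (r, a, d)" "\<forall>j<r. a j \<in> A" "\<forall>j<r. d j > 0"
    using \<theta> by (rule params_cases)
  obtain w e where xe: "x = (\<Sum>j<r. w j *s a j) + e"
    and L: "(\<Sum>j<r. cmod (w j)) + (norm e)\<^sup>2 / (2 * \<beta>) \<le> Lfun x \<theta> \<beta>"
    using Lfun_ge_decomp[OF rad(3) \<beta>, of x a] rad(1) by blast
  have "(\<Sum>j<r. w j *s a j) \<in> vec.span A"
    using rad(2) by (intro vec.span_sum vec.span_scale vec.span_base) auto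
  then have "infdist x (vec.span A) \<le> norm e"
    using infdist_le[of _ "vec.span A" x] by (force simp: xe dist_norm)
  then have "(infdist x (vec.span A))\<^sup>2 / (2 * \<beta>) \<le> (norm e)\<^sup>2 / (2 * \<beta>)"
    using \<beta> by (intro divide_right_mono power_mono infdist_nonneg) auto
  also have "\<dots> \<le> Lfun x \<theta> \<beta>"
    using L sum_nonneg[of "{..<r}" "\<lambda>j. cmod (w j)"] by simp
  finally show ?thesis .
qed

lemma Lfun_ge_below_atomic_norm:
  assumes c: "ereal c < atomic_norm A x"
  obtains \<beta> where "\<beta> > 0" and "\<And>\<theta>. \<theta> \<in> params A \<Longrightarrow> c \<le> Lfun x \<theta> \<beta>"
proof (cases "x \<in> vec.span A")
  case True
  obtain K where K: "\<And>\<theta> \<beta>. \<theta> \<in> params A \<Longrightarrow> \<beta> > 0 \<Longrightarrow>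
      atomic_norm A x \<le> ereal (Lfun x \<theta> \<beta> + \<beta> * K\<^sup>2 / 2)"
    using atomic_norm_le_Lfun_add[OF True] by blast
  obtain c' where c': "c < c'" "ereal c' < atomic_norm A x"
    using ereal_dense2[OF c] by auto
  define \<beta> where "\<beta> = 2 * (c' - c) / (K\<^sup>2 + 1)"
  have \<beta>: "\<beta> > 0" using c' by (simp add: \<beta>_def add_nonneg_pos)
  have K1: "K\<^sup>2 + 1 > 0" by (simp add: add_nonneg_pos)
  then have "\<beta> * K\<^sup>2 / 2 = (c' - c) * (K\<^sup>2 / (K\<^sup>2 + 1))"
    by (simp add: \<beta>_def field_simps)
  also have "\<dots> \<le> c' - c"
    using c' K1 by (intro mult_right_le_one_le) auto
  finally have "\<beta> * K\<^sup>2 / 2 \<le> c' - c" .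
  moreover have "c' < Lfun x \<theta> \<beta> + \<beta> * K\<^sup>2 / 2" if "\<theta> \<in> params A" for \<theta>
    using order_less_le_trans[OF c'(2) K[OF that \<beta>]] by simp
  ultimately show ?thesis
    using that[OF \<beta>] by fastforce
next
  case False
  define \<delta> where "\<delta> = infdist x (vec.span A)"
  have \<delta>: "\<delta> > 0"
    unfolding \<delta>_def using False closed_vec_span vec.span_zero
    by (intro infdist_pos_not_in_closed) auto
  define \<beta> where "\<beta> = \<delta>\<^sup>2 / (2 * (\<bar>c\<bar> + 1))"
  have \<beta>: "\<beta> > 0" using \<delta> by (simp add: \<beta>_def add_nonneg_pos)
  have "c \<le> \<delta>\<^sup>2 / (2 * \<beta>)" using \<delta> by (simp add: \<beta>_def)
  then show ?thesis
    using that[OF \<beta>] Lfun_ge_infdist_span[OF _ \<beta>, of _ A x] unfolding \<delta>_def by force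
qed

lemma atomic_norm_le_SUP_INF_Lfun:
  "atomic_norm A x \<le> (SUP \<beta>\<in>{0<..}. INF \<theta>\<in>params A. ereal (Lfun x \<theta> \<beta>))"
proof (rule dense_le)
  fix c assume "c < atomic_norm A x"
  then obtain c' where c': "c < ereal c'" "ereal c' < atomic_norm A x"
    using ereal_dense2 by blast
  obtain \<beta> where \<beta>: "\<beta> > 0" "\<And>\<theta>. \<theta> \<in> params A \<Longrightarrow> c' \<le> Lfun x \<theta> \<beta>"
    using Lfun_ge_below_atomic_norm[OF c'(2)] by blast
  have "ereal c' \<le> (INF \<theta>\<in>params A. ereal (Lfun x \<theta> \<beta>))"
    using \<beta>(2) by (simp add: INF_greatest)
  also have "\<dots> \<le> (SUP \<beta>\<in>{0<..}. INF \<theta>\<in>params A. ereal (Lfun x \<theta> \<beta>))"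
    using \<beta>(1) by (intro SUP_upper) simp
  finally show "c \<le> (SUP \<beta>\<in>{0<..}. INF \<theta>\<in>params A. ereal (Lfun x \<theta> \<beta>))"
    using c'(1) by simp
qed

lemma INF_SUP_Lfun_le_atomic_norm:
  "(INF \<theta>\<in>params A. SUP \<beta>\<in>{0<..}. ereal (Lfun x \<theta> \<beta>)) \<le> atomic_norm A x"
  unfolding atomic_norm_def
proof (rule INF_greatest)
  fix p assume "p \<in> {(r::nat, s, a). r \<ge> 1 \<and> (\<forall>k<r. a k \<in> A) \<and> x = (\<Sum>k<r. s k *s a k)}"
  then obtain r :: nat and s a where p: "p = (r, s, a)"
    and r: "r \<ge> 1" and a: "\<forall>k<r. a k \<in> A" and x: "x = (\<Sum>k<r. s k *s a k)"
    by auto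
  show "(INF \<theta>\<in>params A. SUP \<beta>\<in>{0<..}. ereal (Lfun x \<theta> \<beta>))
      \<le> ereal (\<Sum>k<fst p. cmod (fst (snd p) k))"
    unfolding p fst_conv snd_conv
  proof (rule ereal_le_epsilon2)
    fix \<epsilon> :: real assume \<epsilon>: "\<epsilon> > 0"
    let ?\<theta> = "(r, a, \<lambda>k. cmod (s k) + 2 * \<epsilon> / r)"
    have "?\<theta> \<in> params A"
      using r a \<epsilon> by (simp add: params_def add_nonneg_pos)
    then have "(INF \<theta>\<in>params A. SUP \<beta>\<in>{0<..}. ereal (Lfun x \<theta> \<beta>))
        \<le> (SUP \<beta>\<in>{0<..}. ereal (Lfun x ?\<theta> \<beta>))"
      by (rule INF_lower)
    also have "\<dots> \<le> ereal ((\<Sum>k<r. cmod (s k)) + \<epsilon>)"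
    proof (rule SUP_least)
      fix \<beta> :: real assume "\<beta> \<in> {0<..}"
      then have "Lfun x ?\<theta> \<beta> \<le> (\<Sum>k<r. cmod (s k)) + r * (2 * \<epsilon> / r) / 2"
        using r \<epsilon> by (intro Lfun_le_sum_norm x) auto
      then show "ereal (Lfun x ?\<theta> \<beta>) \<le> ereal ((\<Sum>k<r. cmod (s k)) + \<epsilon>)"
        using r by simp
    qed
    finally show "(INF \<theta>\<in>params A. SUP \<beta>\<in>{0<..}. ereal (Lfun x \<theta> \<beta>))
        \<le> ereal (\<Sum>k<r. cmod (s k)) + ereal \<epsilon>"
      using r by simp
  qed
qed

theorem theorem3:
  fixes A :: "(complex^'n) set" and x :: "complex^'n"
  assumes indep: "\<forall>S. S \<subseteq> A \<and> finite S \<and> card S \<le> CARD('n) \<longrightarrow> vec.independent S"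
  shows "(\<exists>lim0 :: nat \<times> (nat \<Rightarrow> complex^'n) \<times> (nat \<Rightarrow> real) \<Rightarrow> ereal.
            (\<forall>\<theta>\<in>params A. ((\<lambda>\<beta>. ereal (Lfun x \<theta> \<beta>)) \<longlongrightarrow> lim0 \<theta>) (at_right 0)) \<and>
            atomic_norm A x = (INF \<theta>\<in>params A. lim0 \<theta>))
       \<and> ((\<lambda>\<beta>. INF \<theta>\<in>params A. ereal (Lfun x \<theta> \<beta>)) \<longlongrightarrow> atomic_norm A x) (at_right 0)"
proof -
  define lim0 where "lim0 \<theta> = (SUP \<beta>\<in>{0<..}. ereal (Lfun x \<theta> \<beta>))" for \<theta>
  have antimono: "ereal (Lfun x \<theta> t) \<le> ereal (Lfun x \<theta> s)"
    if "\<theta> \<in> params A" "0 < s" "s \<le> t" for \<theta> s t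
    using that by (auto elim!: params_cases intro: Lfun_antimono)
  have minimax: "(SUP \<beta>\<in>{0<..}. INF \<theta>\<in>params A. ereal (Lfun x \<theta> \<beta>)) \<le> (INF \<theta>\<in>params A. lim0 \<theta>)"
    unfolding lim0_def by (intro SUP_least INF_greatest INF_lower2 SUP_upper2) auto
  have upper: "(INF \<theta>\<in>params A. lim0 \<theta>) \<le> atomic_norm A x"
    unfolding lim0_def by (rule INF_SUP_Lfun_le_atomic_norm)
  have lower: "atomic_norm A x \<le> (SUP \<beta>\<in>{0<..}. INF \<theta>\<in>params A. ereal (Lfun x \<theta> \<beta>))"
    by (rule atomic_norm_le_SUP_INF_Lfun)
  have norm: "atomic_norm A x = (INF \<theta>\<in>params A. lim0 \<theta>)"
    and norm': "atomic_norm A x = (SUP \<beta>\<in>{0<..}. INF \<theta>\<in>params A. ereal (Lfun x \<theta> \<beta>))"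
    using minimax upper lower by (meson antisym order_trans)+
  have "((\<lambda>\<beta>. ereal (Lfun x \<theta> \<beta>)) \<longlongrightarrow> lim0 \<theta>) (at_right 0)" if "\<theta> \<in> params A" for \<theta>
    unfolding lim0_def using antimono[OF that] by (rule tendsto_at_right_SUP_antimono)
  moreover have "((\<lambda>\<beta>. INF \<theta>\<in>params A. ereal (Lfun x \<theta> \<beta>)) \<longlongrightarrow> atomic_norm A x) (at_right 0)"
    unfolding norm' using antimono by (intro tendsto_at_right_SUP_antimono INF_mono) blast
  ultimately show ?thesis using norm by blast
qed

end
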